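(* Let $x,y\ge 1$ and let $n\ge \max(x,y)$ be an integer for which minimal $(x,y)$ task-dependency graphs of order $n$ exist. The maximum possible number of edges of a minimal $(x,y)$ task-dependency graph of order $n$ is $0$ if $n=\max(x,y)$ (in which case $x=y$), $2n-x-y-1$ if $n=\max(x,y)+1$, and $2n-x-y-2$ if $n>\max(x,y)+1$.
   Context: A task-dependency graph is a finite directed acyclic graph (no loops, no multiple edges). A vertex is initial if it has in-degree $0$ and terminal if it has out-degree $0$; an isolated vertex counts as both initial and terminal. An $(x,y)$ task-dependency graph is a task-dependency graph with exactly $x$ initial vertices and exactly $y$ terminal vertices. A minimal $(x,y)$ task-dependency graph is an $(x,y)$ task-dependency graph such that removing any single edge produces a graph that is not an $(x,y)$ task-dependency graph. The order of a graph is its number of vertices. *)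

theory Defs
  imports Main
begin

text \<open>A directed graph is given by a vertex set V and an edge relation E \<subseteq> V \<times> V
  (so there are no multiple edges). A task-dependency graph is a finite
  directed acyclic graph; acyclicity (no (v,v) in the transitive closure) also
  excludes loops.\<close>

definition tdg :: "'a set \<Rightarrow> ('a \<times> 'a) set \<Rightarrow> bool" where
  "tdg V E \<longleftrightarrow> finite V \<and> E \<subseteq> V \<times> V \<and> acyclic E"

definition initial_vertices :: "'a set \<Rightarrow> ('a \<times> 'a) set \<Rightarrow> 'a set" where
  "initial_vertices V E = {v \<in> V. \<forall>u. (u, v) \<notin> E}"

definition terminal_vertices :: "'a set \<Rightarrow> ('a \<times> 'a) set \<Rightarrow> 'a set" where
  "terminal_vertices V E = {v \<in> V. \<forall>w. (v, w) \<notin> E}"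

definition xy_tdg :: "nat \<Rightarrow> nat \<Rightarrow> 'a set \<Rightarrow> ('a \<times> 'a) set \<Rightarrow> bool" where
  "xy_tdg x y V E \<longleftrightarrow> tdg V E \<and> card (initial_vertices V E) = x
      \<and> card (terminal_vertices V E) = y"

definition minimal_xy_tdg :: "nat \<Rightarrow> nat \<Rightarrow> 'a set \<Rightarrow> ('a \<times> 'a) set \<Rightarrow> bool" where
  "minimal_xy_tdg x y V E \<longleftrightarrow> xy_tdg x y V E \<and> (\<forall>e \<in> E. \<not> xy_tdg x y V (E - {e}))"

end

theory Submission
  imports Defs
begin

text \<open>Deleting an edge \<open>(u, v)\<close> preserves acyclicity, and it changes the sets of initial
  and terminal vertices exactly when it is the last in-edge of \<open>v\<close> or the last out-edge
  of \<open>u\<close>. So a graph is minimal iff every edge is the only out-edge of its tail or the only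
  in-edge of its head: viewed as a bipartite graph between tails and heads, \<open>E\<close> is a
  disjoint union of stars. The \<open>n - y\<close> tails and \<open>n - x\<close> heads therefore carry at most
  \<open>2n - x - y - 1\<close> edges, with equality only for a single star, which needs a single tail
  or a single head, i.e. \<open>n = max x y + 1\<close>. Otherwise both sides have at least two
  vertices, so there are at least two stars. An in-star, respectively an out-star and an
  in-star sharing leaves, attain these bounds.\<close>

definition star_forest :: "('a \<times> 'a) set \<Rightarrow> bool" where
  "star_forest E \<longleftrightarrow>
     (\<forall>(u, v) \<in> E. (\<forall>w. (u, w) \<in> E \<longrightarrow> w = v) \<or> (\<forall>w. (w, v) \<in> E \<longrightarrow> w = u))"

lemma star_forest_converse [simp]: "star_forest (E\<inverse>) \<longleftrightarrow> star_forest E"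
  unfolding star_forest_def by blast

lemma star_forest_split:
  assumes "star_forest E"
  obtains F G where "E = F \<union> G" "F \<inter> G = {}" "inj_on fst F" "inj_on snd G"
    "fst ` F \<inter> fst ` G = {}" "snd ` F \<inter> snd ` G = {}"
proof
  define F where "F = {(u, v) \<in> E. \<forall>w. (u, w) \<in> E \<longrightarrow> w = v}"
  have sole_in: "w = u" if "(u, v) \<in> E - F" and "(w, v) \<in> E" for u v w
    using that assms unfolding star_forest_def F_def by blast
  show "E = F \<union> (E - F)" "F \<inter> (E - F) = {}"
    unfolding F_def by blast+
  show "inj_on fst F"
    unfolding F_def inj_on_def by auto
  show "inj_on snd (E - F)"
    unfolding inj_on_def using sole_in by (metis DiffD1 prod.collapse)
  show "fst ` F \<inter> fst ` (E - F) = {}"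
  proof (rule equals0I)
    fix u assume "u \<in> fst ` F \<inter> fst ` (E - F)"
    then obtain v v' where "(u, v) \<in> F" and "(u, v') \<in> E - F"
      by force
    then show False
      unfolding F_def by auto
  qed
  show "snd ` F \<inter> snd ` (E - F) = {}"
  proof (rule equals0I)
    fix v assume "v \<in> snd ` F \<inter> snd ` (E - F)"
    then obtain u u' where "(u, v) \<in> F" and "(u', v) \<in> E - F"
      by force
    moreover from this have "u = u'"
      using sole_in unfolding F_def by blast
    ultimately show False
      by simp
  qed
qed

lemma card_star_forest:
  assumes "finite E" and "star_forest E" and "E \<noteq> {}"
  shows "card E < card (Domain E) + card (Range E)"
    and "\<lbrakk>2 \<le> card (Domain E); 2 \<le> card (Range E)\<rbrakk>
      \<Longrightarrow> card E + 2 \<le> card (Domain E) + card (Range E)"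
proof -
  obtain F G where split: "E = F \<union> G" "F \<inter> G = {}" "inj_on fst F" "inj_on snd G"
    "fst ` F \<inter> fst ` G = {}" "snd ` F \<inter> snd ` G = {}"
    using star_forest_split[OF \<open>star_forest E\<close>] by blast
  have fin: "finite F" "finite G"
    using \<open>finite E\<close> split(1) by auto
  have "Domain E = fst ` F \<union> fst ` G" "Range E = snd ` F \<union> snd ` G"
    using split(1) by force+
  then have card_Domain: "card (Domain E) = card F + card (fst ` G)"
    and card_Range: "card (Range E) = card (snd ` F) + card G"
    using split fin by (simp_all add: card_Un_disjoint card_image)
  have card_E: "card E = card F + card G"
    using split fin by (simp add: card_Un_disjoint)
  have tails: "card (fst ` G) = 0 \<longleftrightarrow> G = {}" and heads: "card (snd ` F) = 0 \<longleftrightarrow> F = {}"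
    using fin by simp_all
  show "card E < card (Domain E) + card (Range E)"
    using \<open>E \<noteq> {}\<close> split(1) card_Domain card_Range card_E tails heads by auto
  show "card E + 2 \<le> card (Domain E) + card (Range E)"
    if "2 \<le> card (Domain E)" and "2 \<le> card (Range E)"
  proof (cases "F = {} \<or> G = {}")
    case True
    then show ?thesis
      using that card_Domain card_Range card_E fin by auto
  next
    case False
    then show ?thesis
      using card_Domain card_Range card_E tails heads by linarith
  qed
qed

lemma card_Domain_add_card_terminal_vertices:
  assumes "finite V" and "E \<subseteq> V \<times> V"
  shows "card (Domain E) + card (terminal_vertices V E) = card V"
proof -
  have "terminal_vertices V E = V - Domain E" and "Domain E \<subseteq> V"
    using assms(2) unfolding terminal_vertices_def by auto
  then show ?thesis
    using assms(1) by (simp add: card_Diff_subset card_mono finite_subset)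
qed

lemma card_Range_add_card_initial_vertices:
  assumes "finite V" and "E \<subseteq> V \<times> V"
  shows "card (Range E) + card (initial_vertices V E) = card V"
proof -
  have "initial_vertices V E = V - Range E" and "Range E \<subseteq> V"
    using assms(2) unfolding initial_vertices_def by auto
  then show ?thesis
    using assms(1) by (simp add: card_Diff_subset card_mono finite_subset)
qed

lemma xy_tdg_iff_card_Domain_Range:
  "xy_tdg x y V E \<longleftrightarrow> tdg V E \<and> card (Range E) + x = card V \<and> card (Domain E) + y = card V"
  using card_Domain_add_card_terminal_vertices card_Range_add_card_initial_vertices
  unfolding xy_tdg_def tdg_def by (metis add_left_cancel)

lemma xy_tdg_converse: "xy_tdg y x V (E\<inverse>) \<longleftrightarrow> xy_tdg x y V E"
  unfolding xy_tdg_iff_card_Domain_Range tdg_def by auto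

lemma Domain_remove_edge_eq_iff:
  "(u, v) \<in> E \<Longrightarrow> Domain (E - {(u, v)}) = Domain E \<longleftrightarrow> (\<exists>w. (u, w) \<in> E \<and> w \<noteq> v)"
  by blast

lemma Range_remove_edge_eq_iff:
  "(u, v) \<in> E \<Longrightarrow> Range (E - {(u, v)}) = Range E \<longleftrightarrow> (\<exists>w. (w, v) \<in> E \<and> w \<noteq> u)"
  by blast

lemma xy_tdg_remove_edge_iff:
  assumes "xy_tdg x y V E" and "e \<in> E"
  shows "xy_tdg x y V (E - {e}) \<longleftrightarrow> Domain (E - {e}) = Domain E \<and> Range (E - {e}) = Range E"
proof -
  have "finite V" and "E \<subseteq> V \<times> V" and "acyclic E"
    using assms(1) by (auto simp: xy_tdg_def tdg_def)
  then have "tdg V (E - {e})" and "finite (Domain E)" and "finite (Range E)"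
    by (auto simp: tdg_def intro: acyclic_subset finite_subset)
  moreover have "Domain (E - {e}) \<subseteq> Domain E" and "Range (E - {e}) \<subseteq> Range E"
    by auto
  ultimately show ?thesis
    using assms(1) unfolding xy_tdg_iff_card_Domain_Range
    by (metis card_subset_eq add_right_cancel)
qed

lemma minimal_xy_tdg_iff_star_forest:
  "minimal_xy_tdg x y V E \<longleftrightarrow> xy_tdg x y V E \<and> star_forest E"
proof -
  have "\<not> xy_tdg x y V (E - {(u, v)}) \<longleftrightarrow>
      (\<forall>w. (u, w) \<in> E \<longrightarrow> w = v) \<or> (\<forall>w. (w, v) \<in> E \<longrightarrow> w = u)"
    if "xy_tdg x y V E" and "(u, v) \<in> E" for u v
    unfolding xy_tdg_remove_edge_iff[OF that] Domain_remove_edge_eq_iff[OF that(2)]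
      Range_remove_edge_eq_iff[OF that(2)] by blast
  then show ?thesis
    unfolding minimal_xy_tdg_def star_forest_def by fast
qed

lemma minimal_xy_tdg_converse: "minimal_xy_tdg y x V (E\<inverse>) \<longleftrightarrow> minimal_xy_tdg x y V E"
  by (simp add: minimal_xy_tdg_iff_star_forest xy_tdg_converse)

lemma xy_tdg_card_eq_maxD:
  assumes "xy_tdg x y V E" and "card V = max x y"
  shows "E = {} \<and> x = y"
proof -
  have "finite E"
    using assms(1) finite_subset unfolding xy_tdg_def tdg_def by blast
  have Range: "card (Range E) + x = card V" and Domain: "card (Domain E) + y = card V"
    using assms(1) unfolding xy_tdg_iff_card_Domain_Range by blast+
  then have "card (Range E) = 0 \<or> card (Domain E) = 0"
    using assms(2) by linarith
  then have "E = {}"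
    using \<open>finite E\<close> by (auto simp: Domain_fst Range_snd)
  then show ?thesis
    using Range Domain by simp
qed

lemma card_edges_minimal_xy_tdg_le:
  assumes "minimal_xy_tdg x y V E" and "card V = n" and "max x y < n"
  shows "card E \<le> (if n = max x y + 1 then 2 * n - x - y - 1 else 2 * n - x - y - 2)"
proof -
  have "xy_tdg x y V E" and "star_forest E"
    using assms(1) unfolding minimal_xy_tdg_iff_star_forest by blast+
  then have "finite E" and Range: "card (Range E) + x = n" and Domain: "card (Domain E) + y = n"
    using assms(2) finite_subset unfolding xy_tdg_iff_card_Domain_Range tdg_def by blast+
  moreover have "E \<noteq> {}"
    using Range assms(3) by auto
  ultimately have less: "card E < card (Domain E) + card (Range E)"
    and less_two: "\<lbrakk>2 \<le> card (Domain E); 2 \<le> card (Range E)\<rbrakk>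
      \<Longrightarrow> card E + 2 \<le> card (Domain E) + card (Range E)"
    using card_star_forest \<open>star_forest E\<close> by blast+
  show ?thesis
  proof (cases "n = max x y + 1")
    case False
    then have "2 \<le> card (Domain E)" and "2 \<le> card (Range E)"
      using Range Domain assms(3) by auto
    then show ?thesis
      using less_two Range Domain False by auto
  qed (use less Range Domain in auto)
qed

lemma acyclic_if_increasing: "E \<subseteq> {(i, j). i < (j :: nat)} \<Longrightarrow> acyclic E"
  using acyclic_subset wf_acyclic[OF wf_less] by blast

lemma minimal_xy_tdg_in_star:
  assumes "1 \<le> j" and "j \<le> m"
  shows "minimal_xy_tdg m (m + 1 - j) {0..m} ({0..<j} \<times> {m})"
proof -
  have "Domain ({0..<j} \<times> {m}) = {0..<j}" and "Range ({0..<j} \<times> {m}) = {m}"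
    using assms by (auto simp: Domain_fst Range_snd)
  moreover have "tdg {0..m} ({0..<j} \<times> {m})"
    using assms unfolding tdg_def by (auto intro: acyclic_if_increasing)
  ultimately show ?thesis
    unfolding minimal_xy_tdg_iff_star_forest xy_tdg_iff_card_Domain_Range star_forest_def
    using assms by auto
qed

lemma minimal_xy_tdg_double_star:
  fixes k p r :: nat
  defines "E \<equiv> {0} \<times> {1..k} \<union> {1..k + p} \<times> {k + p + r + 1}"
  assumes "1 \<le> k"
  shows "minimal_xy_tdg (p + r + 1) (r + 1) {0..k + p + r + 1} E"
proof -
  have "Domain E = {0..k + p}" and "Range E = insert (k + p + r + 1) {1..k}"
    using assms by (auto simp: Domain_fst Range_snd image_Un)
  moreover have "tdg {0..k + p + r + 1} E"
    unfolding tdg_def E_def by (auto intro: acyclic_if_increasing)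
  moreover have "star_forest E"
    unfolding star_forest_def E_def by auto
  ultimately show ?thesis
    unfolding minimal_xy_tdg_iff_star_forest xy_tdg_iff_card_Domain_Range by simp
qed

lemma minimal_xy_tdg_attains_bound_of_le:
  assumes "1 \<le> y" and "y \<le> x" and "x < n"
  shows "\<exists>(V :: nat set) E. minimal_xy_tdg x y V E \<and> card V = n \<and>
    card E = (if n = x + 1 then 2 * n - x - y - 1 else 2 * n - x - y - 2)"
proof (cases "n = x + 1")
  case True
  have "minimal_xy_tdg x (x + 1 - (x + 1 - y)) {0..x} ({0..<x + 1 - y} \<times> {x})"
    using assms by (intro minimal_xy_tdg_in_star) auto
  moreover have "x + 1 - (x + 1 - y) = y"
    using assms by simp
  ultimately show ?thesis
    using True by (intro exI) (auto simp: card_cartesian_product)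
next
  case False
  define k p r where "k = n - x - 1" and "p = x - y" and "r = y - 1"
  then have "x = p + r + 1" and "y = r + 1" and "n = k + p + r + 2" and "1 \<le> k"
    using assms False by auto
  moreover have "card ({0} \<times> {1..k} \<union> {1..k + p} \<times> {k + p + r + 1}) = 2 * k + p"
    by (subst card_Un_disjoint) (auto simp: card_cartesian_product)
  ultimately show ?thesis
    using minimal_xy_tdg_double_star[of k p r] False by (intro exI) auto
qed

lemma minimal_xy_tdg_attains_bound:
  assumes "1 \<le> x" and "1 \<le> y" and "max x y < n"
  shows "\<exists>(V :: nat set) E. minimal_xy_tdg x y V E \<and> card V = n \<and>
    card E = (if n = max x y + 1 then 2 * n - x - y - 1 else 2 * n - x - y - 2)"
proof (cases "y \<le> x")
  case True
  then show ?thesis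
    using minimal_xy_tdg_attains_bound_of_le assms by (simp add: max_def)
next
  case False
  then obtain V :: "nat set" and E where "minimal_xy_tdg y x V E" and "card V = n"
    and "card E = (if n = y + 1 then 2 * n - y - x - 1 else 2 * n - y - x - 2)"
    using minimal_xy_tdg_attains_bound_of_le assms by (metis max_def nat_le_linear)
  then show ?thesis
    using False minimal_xy_tdg_converse[of x y V E]
    by (intro exI[of _ V] exI[of _ "E\<inverse>"]) (simp add: max_def add.commute)
qed

theorem mainTheorem1:
  fixes x y n :: nat
  assumes "x \<ge> 1" and "y \<ge> 1" and "n \<ge> max x y"
    and "\<exists>(V :: nat set) E. minimal_xy_tdg x y V E \<and> card V = n"
  shows "(n = max x y \<longrightarrow> x = y) \<and>
    Max {card E | (V :: nat set) E. minimal_xy_tdg x y V E \<and> card V = n} =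
      (if n = max x y then 0
       else if n = max x y + 1 then 2 * n - x - y - 1
       else 2 * n - x - y - 2)"
proof (cases "n = max x y")
  case True
  then have "E = {} \<and> x = y" if "minimal_xy_tdg x y V E" and "card V = n" for V :: "nat set" and E
    using that xy_tdg_card_eq_maxD unfolding minimal_xy_tdg_def by blast
  then have "x = y" and "{card E | (V :: nat set) E. minimal_xy_tdg x y V E \<and> card V = n} = {0}"
    using assms(4) by (blast, force)
  then show ?thesis
    using True by simp
next
  case False
  let ?bound = "if n = max x y + 1 then 2 * n - x - y - 1 else 2 * n - x - y - 2"
  let ?S = "{card E | (V :: nat set) E. minimal_xy_tdg x y V E \<and> card V = n}"
  have "max x y < n"
    using False assms(3) by linarith
  then obtain V :: "nat set" and E where "minimal_xy_tdg x y V E" "card V = n" "card E = ?bound"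
    using minimal_xy_tdg_attains_bound[OF assms(1,2)] by blast
  then have "?bound \<in> ?S"
    by (auto intro!: exI[of _ V] exI[of _ E])
  moreover have bounded: "\<forall>c \<in> ?S. c \<le> ?bound"
    using \<open>max x y < n\<close> card_edges_minimal_xy_tdg_le by blast
  moreover have "finite ?S"
    using bounded finite_subset[of ?S "{..?bound}"] by auto
  ultimately have "Max ?S = ?bound"
    by (intro Max_eqI) auto
  then show ?thesis
    using False by argo
qed

end
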